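(* $\mathit{HM}^\ell_1(X)$ is freely generated by the ordered pairs of distinct adjacent points of $X$ at distance $\ell$ apart. In particular, $\mathit{HM}_1(X)=0$ (in all gradings $\ell$) if and only if $X$ is Menger convex.
   Context: Let $X$ be a metric space. A point $y$ is strictly between $x$ and $z$ if $d(x,y)+d(y,z)=d(x,z)$ and $x\neq y\neq z$. Two points are non-adjacent if some point lies strictly between them, and adjacent otherwise; $X$ is Menger convex if any two distinct points are non-adjacent. The magnitude homology $\mathit{HM}^\ell_n(X)$ is the degree-$n$ homology of the chain complex whose $n$-chains in grading $\ell$ are the free abelian group on symbols $\langle x_0,\dots,x_n\rangle$ with $x_i\neq x_{i+1}$ and $d(x_0,x_1)+\cdots+d(x_{n-1},x_n)=\ell$, with boundary $\sum_i(-1)^i d^i$, where $d^i$ deletes $x_i$ if $d(x_{i-1},x_i)+d(x_i,x_{i+1})=d(x_{i-1},x_{i+1})$ and is $0$ otherwise (deleting an endpoint always gives $0$). *)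

theory Defs
  imports "HOL-Analysis.Abstract_Metric_Spaces" "HOL-Algebra.Free_Abelian_Groups"
    "HOL-Algebra.Elementary_Groups"
begin

text \<open>A tuple (x_0,...,x_n) is
  represented as a list of length n+1; chains are finitely supported integer
  valued functions on lists (free Abelian groups as in HOL-Algebra).\<close>

definition strictly_between :: "'a set \<Rightarrow> ('a \<Rightarrow> 'a \<Rightarrow> real) \<Rightarrow> 'a \<Rightarrow> 'a \<Rightarrow> 'a \<Rightarrow> bool" where
  "strictly_between M d x y z \<longleftrightarrow> y \<in> M \<and> d x y + d y z = d x z \<and> x \<noteq> y \<and> y \<noteq> z"

definition adjacent :: "'a set \<Rightarrow> ('a \<Rightarrow> 'a \<Rightarrow> real) \<Rightarrow> 'a \<Rightarrow> 'a \<Rightarrow> bool" where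
  "adjacent M d x z \<longleftrightarrow> \<not> (\<exists>y. strictly_between M d x y z)"

definition Menger_convex :: "'a set \<Rightarrow> ('a \<Rightarrow> 'a \<Rightarrow> real) \<Rightarrow> bool" where
  "Menger_convex M d \<longleftrightarrow> (\<forall>x\<in>M. \<forall>z\<in>M. x \<noteq> z \<longrightarrow> \<not> adjacent M d x z)"

definition mag_tuples :: "'a set \<Rightarrow> ('a \<Rightarrow> 'a \<Rightarrow> real) \<Rightarrow> nat \<Rightarrow> real \<Rightarrow> 'a list set" where
  "mag_tuples M d n l = {xs. length xs = Suc n \<and> set xs \<subseteq> M \<and>
      (\<forall>i<n. xs ! i \<noteq> xs ! Suc i) \<and> (\<Sum>i<n. d (xs ! i) (xs ! Suc i)) = l}"

definition MC :: "'a set \<Rightarrow> ('a \<Rightarrow> 'a \<Rightarrow> real) \<Rightarrow> nat \<Rightarrow> real \<Rightarrow> ('a list \<Rightarrow>\<^sub>0 int) monoid" where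
  "MC M d n l = free_Abelian_group (mag_tuples M d n l)"

definition mag_face :: "('a \<Rightarrow> 'a \<Rightarrow> real) \<Rightarrow> nat \<Rightarrow> 'a list \<Rightarrow> ('a list \<Rightarrow>\<^sub>0 int)" where
  "mag_face d i xs =
     (if 0 < i \<and> Suc i < length xs \<and>
         d (xs ! (i - 1)) (xs ! i) + d (xs ! i) (xs ! Suc i) = d (xs ! (i - 1)) (xs ! Suc i)
      then frag_of (take i xs @ drop (Suc i) xs) else 0)"

definition mag_boundary_gen :: "('a \<Rightarrow> 'a \<Rightarrow> real) \<Rightarrow> 'a list \<Rightarrow> ('a list \<Rightarrow>\<^sub>0 int)" where
  "mag_boundary_gen d xs = (\<Sum>i<length xs. frag_cmul ((-1) ^ i) (mag_face d i xs))"

definition mag_boundary :: "('a \<Rightarrow> 'a \<Rightarrow> real) \<Rightarrow> ('a list \<Rightarrow>\<^sub>0 int) \<Rightarrow> ('a list \<Rightarrow>\<^sub>0 int)" where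
  "mag_boundary d = frag_extend (mag_boundary_gen d)"

definition mag_cycles :: "'a set \<Rightarrow> ('a \<Rightarrow> 'a \<Rightarrow> real) \<Rightarrow> nat \<Rightarrow> real \<Rightarrow> ('a list \<Rightarrow>\<^sub>0 int) set" where
  "mag_cycles M d n l = {c \<in> carrier (MC M d n l). mag_boundary d c = 0}"

definition mag_boundaries :: "'a set \<Rightarrow> ('a \<Rightarrow> 'a \<Rightarrow> real) \<Rightarrow> nat \<Rightarrow> real \<Rightarrow> ('a list \<Rightarrow>\<^sub>0 int) set" where
  "mag_boundaries M d n l = mag_boundary d ` carrier (MC M d (Suc n) l)"

definition HM :: "'a set \<Rightarrow> ('a \<Rightarrow> 'a \<Rightarrow> real) \<Rightarrow> nat \<Rightarrow> real \<Rightarrow> ('a list \<Rightarrow>\<^sub>0 int) set monoid" where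
  "HM M d n l = subgroup_generated (MC M d n l) (mag_cycles M d n l) Mod mag_boundaries M d n l"

definition adjacent_pairs :: "'a set \<Rightarrow> ('a \<Rightarrow> 'a \<Rightarrow> real) \<Rightarrow> real \<Rightarrow> ('a \<times> 'a) set" where
  "adjacent_pairs M d l = {(x, y). x \<in> M \<and> y \<in> M \<and> x \<noteq> y \<and> adjacent M d x y \<and> d x y = l}"

definition pair_class_map :: "'a set \<Rightarrow> ('a \<Rightarrow> 'a \<Rightarrow> real) \<Rightarrow> real \<Rightarrow> ('a \<times> 'a \<Rightarrow>\<^sub>0 int) \<Rightarrow> ('a list \<Rightarrow>\<^sub>0 int) set" where
  "pair_class_map M d l c =
     r_coset (MC M d 1 l) (mag_boundaries M d 1 l) (frag_extend (\<lambda>p. frag_of [fst p, snd p]) c)"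

end

theory Submission
  imports Defs
begin

(* Every 1-chain is a cycle, since each face of <x, z> deletes an endpoint. The boundary of a
   2-tuple <x, y, z> is -<x, z> if y lies between x and z and 0 otherwise; in a metric space such
   an <x, z> is a non-adjacent pair, and every non-adjacent pair arises in this way. Hence the
   1-boundaries are exactly the chains supported on non-adjacent pairs, and dividing them out of
   the free Abelian group on all pairs leaves the free Abelian group on the adjacent ones. *)

lemma trivial_free_Abelian_group_iff: "trivial_group (free_Abelian_group S) \<longleftrightarrow> S = {}"
proof
  assume triv: "trivial_group (free_Abelian_group S)"
  show "S = {}"
  proof (rule ccontr)
    assume "S \<noteq> {}"
    then obtain x where "x \<in> S" by blast
    then have "frag_of x \<in> carrier (free_Abelian_group S)" by simp
    with triv show False by (simp add: trivial_group_def frag_of_nonzero)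
  qed
next
  assume "S = {}"
  then show "trivial_group (free_Abelian_group S)"
    by (auto simp: trivial_group_def)
qed

lemma keys_frag_extend_frag_of:
  "Poly_Mapping.keys (frag_extend (frag_of \<circ> f) c) \<subseteq> f ` Poly_Mapping.keys c"
  using keys_frag_extend[of "frag_of \<circ> f" c] by (auto simp: keys_frag_of)

lemma frag_extend_frag_of_hom:
  assumes "f ` P \<subseteq> S"
  shows "frag_extend (frag_of \<circ> f) \<in> hom (free_Abelian_group P) (free_Abelian_group S)"
proof (rule homI)
  fix c assume "c \<in> carrier (free_Abelian_group P)"
  then show "frag_extend (frag_of \<circ> f) c \<in> carrier (free_Abelian_group S)"
    using assms keys_frag_extend_frag_of[of f c] image_mono[of "Poly_Mapping.keys c" P f] by auto
qed (simp add: frag_extend_add)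

lemma frag_extend_frag_of_left_inverse:
  assumes "\<And>x. x \<in> Poly_Mapping.keys c \<Longrightarrow> g (f x) = x"
  shows "frag_extend (frag_of \<circ> g) (frag_extend (frag_of \<circ> f) c) = c"
proof -
  have "frag_extend (frag_of \<circ> g) (frag_extend (frag_of \<circ> f) c) = frag_extend ((frag_of \<circ> g) \<circ> f) c"
    by (rule frag_extend_compose)
  also have "\<dots> = frag_extend frag_of c"
    by (rule frag_extend_eq) (simp add: assms)
  finally show ?thesis by (metis frag_expansion)
qed

lemma normal_chains_supported_in:
  assumes "N \<subseteq> S"
  shows "{c. Poly_Mapping.keys c \<subseteq> N} \<lhd> free_Abelian_group S"
proof -
  have "subgroup {c. Poly_Mapping.keys c \<subseteq> N} (free_Abelian_group S)"
  proof (rule group.subgroupI)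
    fix a b :: "'a \<Rightarrow>\<^sub>0 int"
    assume "a \<in> {c. Poly_Mapping.keys c \<subseteq> N}" "b \<in> {c. Poly_Mapping.keys c \<subseteq> N}"
    then show "a \<otimes>\<^bsub>free_Abelian_group S\<^esub> b \<in> {c. Poly_Mapping.keys c \<subseteq> N}"
      using keys_add[of a b] by auto
  qed (use assms in auto)
  then show ?thesis by (rule comm_group.subgroup_imp_normal[OF abelian_free_Abelian_group])
qed

lemma frag_extend_frag_of_decompose:
  assumes "Poly_Mapping.keys a \<subseteq> f ` P \<union> N"
  obtains c v where "Poly_Mapping.keys c \<subseteq> P" "Poly_Mapping.keys v \<subseteq> N"
    "frag_extend (frag_of \<circ> f) c + v = a"
proof -
  obtain u v where u: "Poly_Mapping.keys u \<subseteq> f ` P" and "Poly_Mapping.keys v \<subseteq> N" "u + v = a"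
    using assms by (rule frag_split)
  moreover have "frag_extend (frag_of \<circ> f) (frag_extend (frag_of \<circ> inv_into P f) u) = u"
    using u by (intro frag_extend_frag_of_left_inverse f_inv_into_f) blast
  moreover have "Poly_Mapping.keys (frag_extend (frag_of \<circ> inv_into P f) u) \<subseteq> P"
    using keys_frag_extend_frag_of[of "inv_into P f" u] u by (auto intro: inv_into_into)
  ultimately show thesis
    using that by metis
qed

lemma frag_extend_frag_of_eq_0_if_keys_disjoint:
  assumes "inj_on f P" "f ` P \<inter> N = {}" "Poly_Mapping.keys c \<subseteq> P"
    and "Poly_Mapping.keys (frag_extend (frag_of \<circ> f) c) \<subseteq> N"
  shows "c = 0"
proof -
  have "Poly_Mapping.keys (frag_extend (frag_of \<circ> f) c) = {}"
    using assms keys_frag_extend_frag_of[of f c] by blast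
  moreover have "c = frag_extend (frag_of \<circ> inv_into P f) (frag_extend (frag_of \<circ> f) c)"
    using assms by (intro frag_extend_frag_of_left_inverse[symmetric] inv_into_f_f) auto
  ultimately show "c = 0"
    by simp
qed

lemma iso_free_Abelian_group_Mod_supported:
  fixes f :: "'a \<Rightarrow> 'b"
  assumes inj: "inj_on f P" and disj: "f ` P \<inter> N = {}"
  defines "K \<equiv> {c. Poly_Mapping.keys c \<subseteq> N}"
  shows "(\<lambda>c. K #>\<^bsub>free_Abelian_group (f ` P \<union> N)\<^esub> frag_extend (frag_of \<circ> f) c)
           \<in> iso (free_Abelian_group P) (free_Abelian_group (f ` P \<union> N) Mod K)"
proof -
  define G where "G = free_Abelian_group (f ` P \<union> N)"
  define \<psi> where "\<psi> = frag_extend (frag_of \<circ> f)"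
  have K: "K \<lhd> G"
    unfolding K_def G_def by (rule normal_chains_supported_in) blast
  have \<psi>: "\<psi> \<in> hom (free_Abelian_group P) G"
    unfolding \<psi>_def G_def by (rule frag_extend_frag_of_hom) blast
  interpret coset_hom: group_hom "free_Abelian_group P" "G Mod K" "\<lambda>c. K #>\<^bsub>G\<^esub> \<psi> c"
    using hom_compose[OF \<psi> normal.r_coset_hom_Mod[OF K]] normal.factorgroup_is_group[OF K]
    by (simp add: group_hom_def group_hom_axioms_def o_def)
  have surj: "carrier (G Mod K) \<subseteq> (\<lambda>c. K #>\<^bsub>G\<^esub> \<psi> c) ` carrier (free_Abelian_group P)"
  proof
    fix X assume "X \<in> carrier (G Mod K)"
    then obtain a where "a \<in> carrier G" and X: "X = K #>\<^bsub>G\<^esub> a"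
      by (auto simp: carrier_FactGroup)
    then have "Poly_Mapping.keys a \<subseteq> f ` P \<union> N"
      by (simp add: G_def)
    then obtain c v where c: "Poly_Mapping.keys c \<subseteq> P" and v: "Poly_Mapping.keys v \<subseteq> N"
      and a: "\<psi> c + v = a"
      unfolding \<psi>_def by (rule frag_extend_frag_of_decompose)
    have "\<psi> c \<in> carrier G"
      using \<psi> c by (auto simp: hom_def)
    moreover have "v \<in> carrier G" "K \<subseteq> carrier G"
      using v by (auto simp: K_def G_def)
    moreover have "K #>\<^bsub>G\<^esub> v = K"
      using v normal_imp_subgroup[OF K] \<open>v \<in> carrier G\<close>
      by (simp add: K_def G_def group.coset_join2)
    ultimately have "X = K #>\<^bsub>G\<^esub> \<psi> c"
      using group.coset_mult_assoc[of G K v "\<psi> c"] a by (simp add: X G_def add.commute)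
    then show "X \<in> (\<lambda>c. K #>\<^bsub>G\<^esub> \<psi> c) ` carrier (free_Abelian_group P)"
      using c by simp
  qed
  have ker: "c = 0" if c: "c \<in> carrier (free_Abelian_group P)" and "K #>\<^bsub>G\<^esub> \<psi> c = K" for c
  proof -
    have "\<psi> c \<in> carrier G"
      using \<psi> c by (auto simp: hom_def)
    then have "\<psi> c \<in> K #>\<^bsub>G\<^esub> \<psi> c"
      using group.rcos_self[OF _ _ normal_imp_subgroup[OF K]] by (simp add: G_def)
    then have "Poly_Mapping.keys (\<psi> c) \<subseteq> N"
      using \<open>K #>\<^bsub>G\<^esub> \<psi> c = K\<close> by (simp add: K_def)
    then show "c = 0"
      using inj disj c unfolding \<psi>_def by (intro frag_extend_frag_of_eq_0_if_keys_disjoint) auto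
  qed
  have "(\<lambda>c. K #>\<^bsub>G\<^esub> \<psi> c) \<in> iso (free_Abelian_group P) (G Mod K)"
    unfolding coset_hom.iso_iff using surj ker by simp
  then show ?thesis
    unfolding G_def \<psi>_def .
qed

lemma mag_tuples_one:
  "mag_tuples M d 1 l = {[x, z] | x z. x \<in> M \<and> z \<in> M \<and> x \<noteq> z \<and> d x z = l}"
  by (auto simp: mag_tuples_def numeral_2_eq_2 length_Suc_conv)

lemma mag_tuples_two:
  "mag_tuples M d 2 l =
     {[x, y, z] | x y z. x \<in> M \<and> y \<in> M \<and> z \<in> M \<and> x \<noteq> y \<and> y \<noteq> z \<and> d x y + d y z = l}"
  by (auto simp: mag_tuples_def numeral_3_eq_3 numeral_2_eq_2 length_Suc_conv less_Suc_eq lessThan_Suc)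

lemma mag_boundary_gen_pair: "mag_boundary_gen d [a, b] = 0"
  by (simp add: mag_boundary_gen_def mag_face_def lessThan_Suc)

lemma mag_boundary_gen_triple:
  "mag_boundary_gen d [a, b, c] = (if d a b + d b c = d a c then - frag_of [a, c] else 0)"
  by (simp add: mag_boundary_gen_def mag_face_def lessThan_Suc numeral_3_eq_3)

definition nonadjacent_tuples :: "'a set \<Rightarrow> ('a \<Rightarrow> 'a \<Rightarrow> real) \<Rightarrow> real \<Rightarrow> 'a list set" where
  "nonadjacent_tuples M d l =
     {[x, z] | x z. x \<in> M \<and> z \<in> M \<and> x \<noteq> z \<and> d x z = l \<and> \<not> adjacent M d x z}"

lemma mag_tuples_one_split:
  "mag_tuples M d 1 l = (\<lambda>p. [fst p, snd p]) ` adjacent_pairs M d l \<union> nonadjacent_tuples M d l"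
  unfolding mag_tuples_one adjacent_pairs_def nonadjacent_tuples_def by force

lemma adjacent_pairs_nonadjacent_tuples_disjoint:
  "(\<lambda>p. [fst p, snd p]) ` adjacent_pairs M d l \<inter> nonadjacent_tuples M d l = {}"
  unfolding adjacent_pairs_def nonadjacent_tuples_def by auto

lemma mag_cycles_one: "mag_cycles M d 1 l = carrier (MC M d 1 l)"
proof -
  have "mag_boundary d c = 0" if "c \<in> carrier (MC M d 1 l)" for c
    unfolding mag_boundary_def
  proof (rule frag_extend_eq_0)
    fix xs assume "xs \<in> Poly_Mapping.keys c"
    then have "xs \<in> mag_tuples M d 1 l"
      using that by (auto simp: MC_def)
    then show "mag_boundary_gen d xs = 0"
      unfolding mag_tuples_one by (auto simp: mag_boundary_gen_pair)
  qed
  then show ?thesis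
    unfolding mag_cycles_def by blast
qed

lemma HM_one: "HM M d 1 l = MC M d 1 l Mod mag_boundaries M d 1 l"
  unfolding HM_def mag_cycles_one
  by (simp add: MC_def group.subgroup_generated_group_carrier)

lemma (in Metric_space) distinct_if_dist_add_eq:
  assumes "a \<in> M" "b \<in> M" "a \<noteq> b" "d a b + d b c = d a c"
  shows "a \<noteq> c"
proof
  assume "a = c"
  then have "d a b + d b a = 0"
    using assms by simp
  moreover have "0 < d a b"
    using assms mdist_pos_less by blast
  ultimately show False
    using nonneg[of b a] by linarith
qed

lemma (in Metric_space) keys_mag_boundary_two:
  assumes "c \<in> carrier (MC M d 2 l)"
  shows "Poly_Mapping.keys (mag_boundary d c) \<subseteq> nonadjacent_tuples M d l"
proof -
  have "Poly_Mapping.keys (mag_boundary_gen d xs) \<subseteq> nonadjacent_tuples M d l"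
    if "xs \<in> Poly_Mapping.keys c" for xs
  proof -
    have "xs \<in> mag_tuples M d 2 l"
      using that assms by (auto simp: MC_def)
    then obtain a b e where xs: "xs = [a, b, e]" and "a \<in> M" "b \<in> M" "e \<in> M" "a \<noteq> b" "b \<noteq> e"
      and "d a b + d b e = l"
      unfolding mag_tuples_two by blast
    moreover have "[a, e] \<in> nonadjacent_tuples M d l" if "d a b + d b e = d a e"
      using that calculation distinct_if_dist_add_eq[of a b e]
      by (auto simp: nonadjacent_tuples_def adjacent_def strictly_between_def)
    ultimately show ?thesis
      by (simp add: mag_boundary_gen_triple keys_frag_of)
  qed
  then show ?thesis
    unfolding mag_boundary_def using keys_frag_extend[of "mag_boundary_gen d" c] by blast
qed

lemma nonadjacent_chain_in_mag_boundary_image: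
  assumes "Poly_Mapping.keys c \<subseteq> nonadjacent_tuples M d l"
  shows "c \<in> mag_boundary d ` carrier (MC M d 2 l)"
  using assms
proof (induction c rule: frag_induction)
  case zero
  have "0 \<in> carrier (MC M d 2 l)"
    by (simp add: MC_def)
  then show ?case
    unfolding mag_boundary_def by force
next
  case (one xs)
  then obtain a e where xs: "xs = [a, e]" and "a \<in> M" "e \<in> M" "d a e = l" "\<not> adjacent M d a e"
    unfolding nonadjacent_tuples_def by blast
  moreover obtain b where "strictly_between M d a b e"
    using \<open>\<not> adjacent M d a e\<close> unfolding adjacent_def by blast
  ultimately have "[a, b, e] \<in> mag_tuples M d 2 l" and between: "d a b + d b e = d a e"
    by (auto simp: mag_tuples_two strictly_between_def)
  then have "- frag_of [a, b, e] \<in> carrier (MC M d 2 l)"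
    by (simp add: MC_def keys_frag_of)
  moreover have "mag_boundary d (- frag_of [a, b, e]) = frag_of xs"
    using between by (simp add: mag_boundary_def frag_extend_minus mag_boundary_gen_triple xs)
  ultimately show ?case
    by (metis image_eqI)
next
  case (diff c1 c2)
  then obtain b1 b2 where "b1 \<in> carrier (MC M d 2 l)" "b2 \<in> carrier (MC M d 2 l)"
    and "c1 = mag_boundary d b1" "c2 = mag_boundary d b2"
    by blast
  moreover have "b1 - b2 \<in> carrier (MC M d 2 l)"
    using calculation keys_diff[of b1 b2] by (auto simp: MC_def)
  ultimately show ?case
    unfolding mag_boundary_def by (metis frag_extend_diff image_eqI)
qed

lemma (in Metric_space) mag_boundaries_one:
  "mag_boundaries M d 1 l = {c. Poly_Mapping.keys c \<subseteq> nonadjacent_tuples M d l}"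
  using keys_mag_boundary_two nonadjacent_chain_in_mag_boundary_image
  unfolding mag_boundaries_def numeral_2_eq_2 One_nat_def by blast

lemma (in Metric_space) pair_class_map_iso:
  "pair_class_map M d l \<in> iso (free_Abelian_group (adjacent_pairs M d l)) (HM M d 1 l)"
proof -
  have "inj_on (\<lambda>p. [fst p, snd p]) (adjacent_pairs M d l)"
    by (auto simp: inj_on_def prod_eq_iff)
  from iso_free_Abelian_group_Mod_supported[OF this adjacent_pairs_nonadjacent_tuples_disjoint]
  show ?thesis
    unfolding pair_class_map_def HM_one MC_def mag_boundaries_one mag_tuples_one_split o_def .
qed

lemma (in Metric_space) trivial_HM_one_iff:
  "trivial_group (HM M d 1 l) \<longleftrightarrow> adjacent_pairs M d l = {}"
proof -
  have "mag_boundaries M d 1 l \<lhd> MC M d 1 l"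
    unfolding mag_boundaries_one MC_def mag_tuples_one_split
    by (rule normal_chains_supported_in) blast
  then have "group (HM M d 1 l)"
    unfolding HM_one by (rule normal.factorgroup_is_group)
  then show ?thesis
    using isomorphic_group_triviality[OF is_isoI[OF pair_class_map_iso]]
    by (simp add: trivial_free_Abelian_group_iff)
qed

theorem corollary7p6:
  fixes M :: "'a set" and d :: "'a \<Rightarrow> 'a \<Rightarrow> real"
  assumes "Metric_space M d"
  shows "(\<forall>l. pair_class_map M d l \<in> iso (free_Abelian_group (adjacent_pairs M d l)) (HM M d 1 l))
         \<and> ((\<forall>l. trivial_group (HM M d 1 l)) \<longleftrightarrow> Menger_convex M d)"
proof -
  interpret Metric_space M d by fact
  have "(\<forall>l. trivial_group (HM M d 1 l)) \<longleftrightarrow> (\<forall>l. adjacent_pairs M d l = {})"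
    using trivial_HM_one_iff by blast
  also have "\<dots> \<longleftrightarrow> Menger_convex M d"
    unfolding Menger_convex_def adjacent_pairs_def by auto
  finally show ?thesis
    using pair_class_map_iso by blast
qed

end
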